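(* Let $\sigma_\theta$, $A_\theta$, $\Sigma$ be as in the context, with $\Sigma\ne\emptyset$, and assume that for every $\delta>0$ there is $\nu_\delta>0$ such that $A_\theta(x)\ge\nu_\delta I$ for all $\theta\in\Theta$ and all $x\in\mathbb T^N$ with $\operatorname{dist}(x,\Sigma)>\delta$. Then for every $\kappa>0$ the condition (SS$_\kappa$) holds.
   Context: $\mathbb T^N=\mathbb R^N/\mathbb Z^N$, $\Theta$ a metric space, $C>0$ fixed; for each $\theta\in\Theta$, $\sigma_\theta\in W^{1,\infty}(\mathbb T^N;\mathcal M_N)$ with $|\sigma_\theta|,|D\sigma_\theta|\le C$ and $A_\theta=\sigma_\theta\sigma_\theta^T$. $\Sigma:=\{x\in\mathbb T^N:A_\theta(x)=0\ \forall\theta\}$. $\pi:\mathbb R^N\to\mathbb T^N$ is the projection; $\tilde\Sigma=\pi^{-1}(\Sigma)$, $\tilde\sigma_\theta=\sigma_\theta\circ\pi$, $\tilde A_\theta=\tilde\sigma_\theta\tilde\sigma_\theta^T$, $\tilde\Sigma_\delta=\{\tilde x:\operatorname{dist}(\tilde x,\tilde\Sigma)\le\delta\}$. Condition (SS$_\kappa$): for every $\delta>0$ there exist $\tilde\psi_\delta\in C^2(\mathbb R^N)$ and a bounded open set $\Omega_\delta\subset\mathbb R^N$ with $[0,1]^N\subset\Omega_\delta$, $\tilde\psi_\delta\le0$ in $\Omega_\delta$, $\tilde\psi_\delta\ge0$ in $\mathbb R^N\setminus\Omega_\delta$, and $\inf_{\theta\in\Theta}\{-\mathrm{tr}(\tilde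 A_\theta(\tilde x)D^2\tilde\psi_\delta(\tilde x))\}-\kappa|D\tilde\psi_\delta(\tilde x)|>0$ for all $\tilde x\in\tilde\Sigma_\delta^C\cap\Omega_\delta$. *)

theory Defs
  imports "HOL-Analysis.Analysis"
begin

text \<open>Functions on the torus T^N are represented by their Z^N-periodic lifts to R^N.\<close>

definition int_vec :: "real^'n \<Rightarrow> bool" where
  "int_vec k \<longleftrightarrow> (\<forall>i. k $ i \<in> \<int>)"

definition zn_periodic :: "(real^'n \<Rightarrow> 'b) \<Rightarrow> bool" where
  "zn_periodic f \<longleftrightarrow> (\<forall>x k. int_vec k \<longrightarrow> f (x + k) = f x)"

definition C2_with :: "(real^'n \<Rightarrow> real) \<Rightarrow> (real^'n \<Rightarrow> real^'n) \<Rightarrow> (real^'n \<Rightarrow> real^'n^'n) \<Rightarrow> bool" where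
  "C2_with psi Dpsi D2psi \<longleftrightarrow>
     (\<forall>x. (psi has_derivative (\<lambda>h. Dpsi x \<bullet> h)) (at x)) \<and>
     (\<forall>x. (Dpsi has_derivative (\<lambda>h. D2psi x *v h)) (at x)) \<and>
     continuous_on UNIV D2psi"

definition unit_cube :: "(real^'n) set" where
  "unit_cube = {x. \<forall>i. 0 \<le> x $ i \<and> x $ i \<le> 1}"

end

theory Submission
  imports Defs
begin

text \<open>
  The barrier is a Gaussian well centred at a point p of Sig,
  psi x = exp (-mu R^2) - exp (-mu |x - p|^2), which is negative exactly on the ball
  B(p, R) containing the unit cube. Its Hessian is g x (I - 2 mu (x - p)(x - p)^T) with
  g x = 2 mu exp (-mu |x - p|^2), hence
  -tr (A D^2 psi) = g x (2 mu <x - p, A (x - p)> - tr A), while kappa |D psi| = g x kappa |x - p|.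
  Away from Sig we have |x - p| > delta, ellipticity gives <v, A v> >= nu |v|^2 and
  tr A = |sigma|^2 <= C^2, so for large mu the quadratic term 2 mu nu |x - p|^2 beats
  kappa |x - p| + C^2.
\<close>

definition outer_prod :: "real^'m \<Rightarrow> real^'n \<Rightarrow> real^'n^'m" where
  "outer_prod v w = (\<chi> i j. v $ i * w $ j)"

lemma outer_prod_mult_vec: "outer_prod v w *v h = (w \<bullet> h) *\<^sub>R v"
  by (simp add: outer_prod_def matrix_vector_mult_def inner_vec_def vec_eq_iff
      sum_distrib_left algebra_simps)

lemma trace_mult_outer_prod:
  fixes a :: "real^'n^'n"
  shows "trace (a ** outer_prod v w) = w \<bullet> (a *v v)"
  by (simp add: trace_def outer_prod_def matrix_matrix_mult_def matrix_vector_mult_def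
      inner_vec_def sum_distrib_left algebra_simps)

lemma matrix_diff_ldistrib:
  fixes A :: "'a::ring_1^'n^'m"
  shows "A ** (B - C) = A ** B - A ** C"
  by (vector matrix_matrix_mult_def sum_subtractf right_diff_distrib)

lemma trace_scaleR: "trace (c *\<^sub>R A) = c * trace A"
  for A :: "real^'n^'n"
  by (simp add: trace_def sum_distrib_left)

lemma matrix_mult_scaleR_right: "A ** (c *\<^sub>R B) = c *\<^sub>R (A ** B)"
  for A :: "real^'n^'m"
  by (simp add: matrix_scalar_ac scalar_matrix_assoc)

lemma trace_mult_transpose_self:
  fixes s :: "real^'n^'m"
  shows "trace (s ** transpose s) = (norm s)\<^sup>2"
  by (simp add: trace_def matrix_matrix_mult_def transpose_def norm_vec_def L2_set_def
      sum_nonneg power2_eq_square)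

lemma C2_with_gaussian:
  fixes p :: "real^'n"
  shows "C2_with (\<lambda>x. c - exp (- \<mu> * ((x - p) \<bullet> (x - p))))
           (\<lambda>x. (2 * \<mu> * exp (- \<mu> * ((x - p) \<bullet> (x - p)))) *\<^sub>R (x - p))
           (\<lambda>x. (2 * \<mu> * exp (- \<mu> * ((x - p) \<bullet> (x - p)))) *\<^sub>R
                  (mat 1 - (2 * \<mu>) *\<^sub>R outer_prod (x - p) (x - p)))"
proof -
  let ?g = "\<lambda>x. 2 * \<mu> * exp (- \<mu> * ((x - p) \<bullet> (x - p)))"
  have grad: "((\<lambda>x. c - exp (- \<mu> * ((x - p) \<bullet> (x - p)))) has_derivative
      (\<lambda>h. (?g x *\<^sub>R (x - p)) \<bullet> h)) (at x)" for x
    by (auto intro!: derivative_eq_intros simp: fun_eq_iff inner_commute algebra_simps)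
  have hess: "((\<lambda>x. ?g x *\<^sub>R (x - p)) has_derivative
      (\<lambda>h. (?g x *\<^sub>R (mat 1 - (2 * \<mu>) *\<^sub>R outer_prod (x - p) (x - p))) *v h)) (at x)" for x
    by (auto intro!: derivative_eq_intros
        simp: fun_eq_iff outer_prod_mult_vec matrix_vector_mult_diff_rdistrib
          scaleR_matrix_vector_assoc[symmetric] inner_commute algebra_simps)
  have "continuous_on UNIV (\<lambda>x. ?g x *\<^sub>R (mat 1 - (2 * \<mu>) *\<^sub>R outer_prod (x - p) (x - p)))"
    unfolding outer_prod_def by (intro continuous_intros)
  with grad hess show ?thesis
    unfolding C2_with_def by blast
qed

lemma ex_quadratic_dominates_affine:
  fixes \<nu> \<delta> \<kappa> C :: real
  assumes "\<nu> > 0" "\<delta> > 0"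
  shows "\<exists>\<mu>>0. \<forall>r>\<delta>. \<kappa> * r + C < 2 * \<mu> * \<nu> * r\<^sup>2"
proof -
  define a where "a = \<bar>\<kappa>\<bar> + \<bar>C\<bar> / \<delta> + 1"
  have "a > 0" using assms by (simp add: a_def add_nonneg_pos)
  have "\<kappa> * r + C < 2 * (a / (2 * \<nu> * \<delta>)) * \<nu> * r\<^sup>2" if "r > \<delta>" for r
  proof -
    define q where "q = r / \<delta>"
    have "q > 1" "r > 0" using that assms by (auto simp: q_def)
    have "\<kappa> * r \<le> \<bar>\<kappa>\<bar> * r * q"
      using \<open>q > 1\<close> \<open>r > 0\<close> by (smt (verit) abs_ge_self mult_le_cancel_left1 mult_right_mono)
    moreover have "C \<le> \<bar>C\<bar> * q * q"
      using \<open>q > 1\<close> by (smt (verit) abs_ge_self abs_ge_zero mult_le_cancel_left1 mult_right_mono)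
    moreover have "0 < r * q" using \<open>q > 1\<close> \<open>r > 0\<close> by simp
    moreover have "2 * (a / (2 * \<nu> * \<delta>)) * \<nu> * r\<^sup>2 = \<bar>\<kappa>\<bar> * r * q + \<bar>C\<bar> * q * q + r * q"
      using assms by (simp add: a_def q_def power2_eq_square field_simps)
    ultimately show ?thesis by linarith
  qed
  then show ?thesis
    using \<open>a > 0\<close> assms by (intro exI[of _ "a / (2 * \<nu> * \<delta>)"]) auto
qed

lemma unit_cube_subset_ball: "unit_cube \<subseteq> ball p (norm p + real CARD('n) + 1)"
  for p :: "real^'n"
proof
  fix x :: "real^'n"
  assume "x \<in> unit_cube"
  then have "(\<Sum>i\<in>UNIV. \<bar>x $ i\<bar>) \<le> (\<Sum>i\<in>(UNIV::'n set). 1)"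
    unfolding unit_cube_def by (intro sum_mono) auto
  then have "norm x \<le> real CARD('n)"
    using norm_le_l1_cart[of x] by simp
  then show "x \<in> ball p (norm p + real CARD('n) + 1)"
    using norm_triangle_ineq4[of p x] by (simp add: dist_norm)
qed

lemma neg_trace_mult_gaussian_hessian_ge:
  fixes a :: "real^'n^'n"
  assumes "k > 0" "\<mu> > 0" "trace a \<le> C" "v \<bullet> (a *v v) \<ge> \<nu> * (norm v)\<^sup>2"
  shows "k * (2 * \<mu> * \<nu> * (norm v)\<^sup>2 - C)
           \<le> - trace (a ** (k *\<^sub>R (mat 1 - (2 * \<mu>) *\<^sub>R outer_prod v v)))"
proof -
  have "- trace (a ** (k *\<^sub>R (mat 1 - (2 * \<mu>) *\<^sub>R outer_prod v v)))
          = k * (2 * \<mu> * (v \<bullet> (a *v v)) - trace a)"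
    by (simp add: matrix_mult_scaleR_right matrix_diff_ldistrib trace_scaleR trace_sub
        trace_mult_outer_prod algebra_simps)
  moreover have "2 * \<mu> * (\<nu> * (norm v)\<^sup>2) \<le> 2 * \<mu> * (v \<bullet> (a *v v))"
    using assms by (intro mult_left_mono) auto
  then have "2 * \<mu> * \<nu> * (norm v)\<^sup>2 - C \<le> 2 * \<mu> * (v \<bullet> (a *v v)) - trace a"
    using assms(3) by (simp add: mult.assoc)
  ultimately show ?thesis
    using assms(1) by (simp add: mult_left_mono)
qed

lemma gaussian_bump_sign:
  fixes p x :: "real^'n"
  assumes "\<mu> > 0" "R \<ge> 0"
  shows "norm (x - p) \<le> R \<Longrightarrow> exp (- \<mu> * R\<^sup>2) - exp (- \<mu> * ((x - p) \<bullet> (x - p))) \<le> 0"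
    and "R \<le> norm (x - p) \<Longrightarrow> exp (- \<mu> * R\<^sup>2) - exp (- \<mu> * ((x - p) \<bullet> (x - p))) \<ge> 0"
  using assms power_mono[of "norm (x - p)" R 2] power_mono[of R "norm (x - p)" 2]
  by (simp_all add: power2_norm_eq_inner[symmetric])

theorem proposition2p5:
  fixes \<sigma> :: "'th::metric_space \<Rightarrow> real^'n \<Rightarrow> real^'n^'n"
    and C :: real
  defines "A \<equiv> (\<lambda>\<theta> x. \<sigma> \<theta> x ** transpose (\<sigma> \<theta> x))"
  defines "Sig \<equiv> {x. \<forall>\<theta>. A \<theta> x = 0}"
  assumes C_pos: "C > 0"
    and periodic: "\<And>\<theta>. zn_periodic (\<sigma> \<theta>)"
    and bounded: "\<And>\<theta> x. norm (\<sigma> \<theta> x) \<le> C"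
    and lipschitz: "\<And>\<theta> x y. dist (\<sigma> \<theta> x) (\<sigma> \<theta> y) \<le> C * dist x y"
    and Sig_ne: "Sig \<noteq> {}"
    and nondeg: "\<And>\<delta>. \<delta> > 0 \<Longrightarrow> \<exists>\<nu>>0. \<forall>\<theta> x \<xi>. infdist x Sig > \<delta> \<longrightarrow>
                     \<xi> \<bullet> (A \<theta> x *v \<xi>) \<ge> \<nu> * (norm \<xi>)\<^sup>2"
    and kappa_pos: "\<kappa> > 0"
    and delta_pos: "\<delta> > 0"
  shows "\<exists>\<psi> D\<psi> D2\<psi> (\<Omega> :: (real^'n) set).
           C2_with \<psi> D\<psi> D2\<psi> \<and> open \<Omega> \<and> bounded \<Omega> \<and> unit_cube \<subseteq> \<Omega> \<and>
           (\<forall>x\<in>\<Omega>. \<psi> x \<le> 0) \<and> (\<forall>x. x \<notin> \<Omega> \<longrightarrow> \<psi> x \<ge> 0) \<and>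
           (\<forall>x\<in>\<Omega>. infdist x Sig > \<delta> \<longrightarrow>
              (\<exists>m > \<kappa> * norm (D\<psi> x). \<forall>\<theta>. - trace (A \<theta> x ** D2\<psi> x) \<ge> m))"
proof -
  obtain p where p: "p \<in> Sig"
    using Sig_ne by blast
  obtain \<nu> where "\<nu> > 0" and \<nu>: "\<And>\<theta> x \<xi>. infdist x Sig > \<delta> \<Longrightarrow> \<xi> \<bullet> (A \<theta> x *v \<xi>) \<ge> \<nu> * (norm \<xi>)\<^sup>2"
    using nondeg[OF delta_pos] by blast
  obtain \<mu> where "\<mu> > 0" and \<mu>: "\<And>r. r > \<delta> \<Longrightarrow> \<kappa> * r + C\<^sup>2 < 2 * \<mu> * \<nu> * r\<^sup>2"
    using ex_quadratic_dominates_affine[OF \<open>\<nu> > 0\<close> delta_pos] by blast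
  define R where "R = norm p + real CARD('n) + 1"
  define g where "g x = 2 * \<mu> * exp (- \<mu> * ((x - p) \<bullet> (x - p)))" for x :: "real^'n"
  have "\<exists>m > \<kappa> * norm (g x *\<^sub>R (x - p)). \<forall>\<theta>.
          - trace (A \<theta> x ** (g x *\<^sub>R (mat 1 - (2 * \<mu>) *\<^sub>R outer_prod (x - p) (x - p)))) \<ge> m"
    if "infdist x Sig > \<delta>" for x
  proof (intro exI conjI allI)
    have "norm (x - p) > \<delta>"
      using infdist_le[OF p, of x] that by (simp add: dist_norm)
    moreover have "g x > 0"
      using \<open>\<mu> > 0\<close> by (simp add: g_def)
    ultimately have "g x * (\<kappa> * norm (x - p)) < g x * (2 * \<mu> * \<nu> * (norm (x - p))\<^sup>2 - C\<^sup>2)"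
      using \<mu>[of "norm (x - p)"] by (intro mult_strict_left_mono) auto
    with \<open>g x > 0\<close> show "g x * (2 * \<mu> * \<nu> * (norm (x - p))\<^sup>2 - C\<^sup>2) > \<kappa> * norm (g x *\<^sub>R (x - p))"
      by (simp add: mult.left_commute)
    fix \<theta>
    have "trace (A \<theta> x) \<le> C\<^sup>2"
      unfolding A_def trace_mult_transpose_self using bounded[of \<theta> x] by (simp add: power_mono)
    with \<open>g x > 0\<close> show "- trace (A \<theta> x ** (g x *\<^sub>R (mat 1 - (2 * \<mu>) *\<^sub>R outer_prod (x - p) (x - p))))
        \<ge> g x * (2 * \<mu> * \<nu> * (norm (x - p))\<^sup>2 - C\<^sup>2)"
      using \<open>\<mu> > 0\<close> \<nu>[OF that] by (intro neg_trace_mult_gaussian_hessian_ge) auto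
  qed
  then show ?thesis
    using C2_with_gaussian[of "exp (- \<mu> * R\<^sup>2)" \<mu> p] unit_cube_subset_ball[of p]
      gaussian_bump_sign[OF \<open>\<mu> > 0\<close>, of R _ p]
    by (intro exI[of _ "\<lambda>x. exp (- \<mu> * R\<^sup>2) - exp (- \<mu> * ((x - p) \<bullet> (x - p)))"]
        exI[of _ "\<lambda>x. g x *\<^sub>R (x - p)"]
        exI[of _ "\<lambda>x. g x *\<^sub>R (mat 1 - (2 * \<mu>) *\<^sub>R outer_prod (x - p) (x - p))"]
        exI[of _ "ball p R"])
      (auto simp: g_def R_def dist_norm norm_minus_commute)
qed

end
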